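(* Let $P$ be a special product rule with $P$-product $*$. Then for all series $f,g$, $\overline{f*g}=\overline f*\overline g$; consequently reversal is an endomorphism of the commutative $\mathbb Q$-algebra $(\mathbb Q\langle\langle\Sigma\rangle\rangle;\mathbb 0,c\cdot,+,* )$.
   Context: Let $\Sigma$ be a finite alphabet, $\Sigma^*$ the finite words with empty word $\varepsilon$. A series is $f:\Sigma^*\to\mathbb Q$, $f_w=f(w)$; series form a $\mathbb Q$-vector space under pointwise operations with zero $\mathbb 0$. For $a\in\Sigma$, $\delta_af$ is $w\mapsto f(aw)$. The reversal $\overline f$ is $w\mapsto f(\overline w)$ with $\overline w$ the mirror image of $w$. Terms over $X$: generated by $u,v::=x\mid 0\mid c\cdot u\mid u+v\mid u*v$. A product rule is a term $P$ over $\{x,\dot x,y,\dot y\}$; $P(s_1,\dots,s_4)$ is substitution. The $P$-product $*$ and semantics $[\![u]\!]_\varrho$ are the unique pair with $(f*g)_\varepsilon=f_\varepsilon g_\varepsilon$, $\delta_a(f*g)=[\![P]\!]_{[x\mapsto f,\dot x\mapsto\delta_af,y\mapsto g,\dot y\mapsto\delta_ag]}$, and $[\![\cdot]\!]_\varrho$ interpreting variables via $\varrho$, constructors by zero, scalar multiplication, addition, $*$. $u\approx v$ iff $u,v$ denote the same commutative polynomial. $P$ is special if $P(x+y,\dot x+\dot y,z,\dot z)\approx P(x,\dot x,z,\dot z)+P(y,\dot y,z,\dot z)$, $P(x,\dot x,y*z,P(y,\dot y,z,\dot z))\approx P(x*y,P(x,\dot x,y,\dot y),z,\dot z)$, $P(x,\dot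 x,y,\dot y)\approx P(y,\dot y,x,\dot x)$. *)

theory Defs
  imports Complex_Main
begin

type_synonym 'a series = "'a list \<Rightarrow> rat"

definition szero :: "'a series" where "szero = (\<lambda>w. 0)"
definition sscal :: "rat \<Rightarrow> 'a series \<Rightarrow> 'a series" where "sscal c f = (\<lambda>w. c * f w)"
definition splus :: "'a series \<Rightarrow> 'a series \<Rightarrow> 'a series" where "splus f g = (\<lambda>w. f w + g w)"
definition sderiv :: "'a \<Rightarrow> 'a series \<Rightarrow> 'a series" where "sderiv a f = (\<lambda>w. f (a # w))"
definition srev :: "'a series \<Rightarrow> 'a series" where "srev f = (\<lambda>w. f (rev w))"

datatype 'v trm = Var 'v | Zero | Scal rat "'v trm" | Plus "'v trm" "'v trm" | Times "'v trm" "'v trm"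

fun subst :: "('v \<Rightarrow> 'w trm) \<Rightarrow> 'v trm \<Rightarrow> 'w trm" where
  "subst \<sigma> (Var x) = \<sigma> x"
| "subst \<sigma> Zero = Zero"
| "subst \<sigma> (Scal c u) = Scal c (subst \<sigma> u)"
| "subst \<sigma> (Plus u v) = Plus (subst \<sigma> u) (subst \<sigma> v)"
| "subst \<sigma> (Times u v) = Times (subst \<sigma> u) (subst \<sigma> v)"

datatype var4 = X | Xd | Y | Yd
datatype var6 = X6 | Xd6 | Y6 | Yd6 | Z6 | Zd6

definition app4 :: "var4 trm \<Rightarrow> 'w trm \<Rightarrow> 'w trm \<Rightarrow> 'w trm \<Rightarrow> 'w trm \<Rightarrow> 'w trm" where
  "app4 P s1 s2 s3 s4 = subst (\<lambda>v. case v of X \<Rightarrow> s1 | Xd \<Rightarrow> s2 | Y \<Rightarrow> s3 | Yd \<Rightarrow> s4) P"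

text \<open>Commutative-polynomial evaluation over Q; two terms denote the same
  commutative polynomial in Q[vars] iff they agree under all rational valuations
  (Q is an infinite field).\<close>
fun peval :: "('v \<Rightarrow> rat) \<Rightarrow> 'v trm \<Rightarrow> rat" where
  "peval \<rho> (Var x) = \<rho> x"
| "peval \<rho> Zero = 0"
| "peval \<rho> (Scal c u) = c * peval \<rho> u"
| "peval \<rho> (Plus u v) = peval \<rho> u + peval \<rho> v"
| "peval \<rho> (Times u v) = peval \<rho> u * peval \<rho> v"

definition poly_equiv :: "'v trm \<Rightarrow> 'v trm \<Rightarrow> bool" (infix "\<approx>" 50) where
  "u \<approx> v \<longleftrightarrow> (\<forall>\<rho>. peval \<rho> u = peval \<rho> v)"

definition special :: "var4 trm \<Rightarrow> bool" where
  "special P \<longleftrightarrow>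
     app4 P (Plus (Var X6) (Var Y6)) (Plus (Var Xd6) (Var Yd6)) (Var Z6) (Var Zd6)
       \<approx> Plus (app4 P (Var X6) (Var Xd6) (Var Z6) (Var Zd6)) (app4 P (Var Y6) (Var Yd6) (Var Z6) (Var Zd6))
   \<and> app4 P (Var X6) (Var Xd6) (Times (Var Y6) (Var Z6)) (app4 P (Var Y6) (Var Yd6) (Var Z6) (Var Zd6))
       \<approx> app4 P (Times (Var X6) (Var Y6)) (app4 P (Var X6) (Var Xd6) (Var Y6) (Var Yd6)) (Var Z6) (Var Zd6)
   \<and> app4 P (Var X6) (Var Xd6) (Var Y6) (Var Yd6) \<approx> app4 P (Var Y6) (Var Yd6) (Var X6) (Var Xd6)"

fun sem :: "('a series \<Rightarrow> 'a series \<Rightarrow> 'a series) \<Rightarrow> ('v \<Rightarrow> 'a series) \<Rightarrow> 'v trm \<Rightarrow> 'a series" where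
  "sem m \<rho> (Var x) = \<rho> x"
| "sem m \<rho> Zero = szero"
| "sem m \<rho> (Scal c u) = sscal c (sem m \<rho> u)"
| "sem m \<rho> (Plus u v) = splus (sem m \<rho> u) (sem m \<rho> v)"
| "sem m \<rho> (Times u v) = m (sem m \<rho> u) (sem m \<rho> v)"

definition env4 :: "'a series \<Rightarrow> 'a series \<Rightarrow> 'a series \<Rightarrow> 'a series \<Rightarrow> var4 \<Rightarrow> 'a series" where
  "env4 f f' g g' = (\<lambda>v. case v of X \<Rightarrow> f | Xd \<Rightarrow> f' | Y \<Rightarrow> g | Yd \<Rightarrow> g')"

definition is_P_product :: "var4 trm \<Rightarrow> ('a series \<Rightarrow> 'a series \<Rightarrow> 'a series) \<Rightarrow> bool" where
  "is_P_product P m \<longleftrightarrow>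
     (\<forall>f g. m f g [] = f [] * g [] \<and>
       (\<forall>a. sderiv a (m f g) = sem m (env4 f (sderiv a f) g (sderiv a g)) P))"

definition pprod :: "var4 trm \<Rightarrow> 'a series \<Rightarrow> 'a series \<Rightarrow> 'a series" where
  "pprod P = (THE m. is_P_product P m)"

end

theory Submission
  imports Defs "HOL-Computational_Algebra.Polynomial" "HOL-Library.Countable"
begin

(* Conjugating the P-product by reversal gives the operation
  m f g = rev (rev f * rev g), which satisfies the defining equations of the P-product
  and hence is the P-product by uniqueness.  This needs the derivative of a product
  in closed form: a special rule agrees as a polynomial with
  c1 x y + c2 (x' y + x y') + c4 x' y' where c2 + c4 c1 = c2^2; then the rule for
  left derivatives has a twin for right derivatives (a letter appended at the end of
  the word), by induction on words since left and right derivatives commute, and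
  reversal exchanges the two.

  Replacing P by this normal form under the semantics requires that polynomially
  equivalent terms denote the same series.  This is proved by induction on the
  length of the word: the derivative of the series of a term is the series of
  another term, whose polynomial value is the second component of the value in the
  commutative algebra on Q x Q with (p,s)(q,t) = (pq, c1 pq + c2 (sq + pt) + c4 st).
  That algebra is associative exactly when c2 + c4 c1 = c2^2, and is then
  isomorphic to Q x Q (c4 \<noteq> 0), to the dual numbers (c4 = 0, c2 = 1), or to
  Q with a square-zero ideal (c4 = c2 = 0); in each case the second component
  depends only on the polynomial. *)

section \<open>Existence and uniqueness of the P-product\<close>

definition agree_below :: "nat \<Rightarrow> 'a series \<Rightarrow> 'a series \<Rightarrow> bool" where
  "agree_below n f g \<longleftrightarrow> (\<forall>w. length w < n \<longrightarrow> f w = g w)"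

definition ops_agree_below ::
  "nat \<Rightarrow> ('a series \<Rightarrow> 'a series \<Rightarrow> 'a series) \<Rightarrow> ('a series \<Rightarrow> 'a series \<Rightarrow> 'a series) \<Rightarrow> bool"
where
  "ops_agree_below n m1 m2 \<longleftrightarrow>
     (\<forall>f1 f2 g1 g2. agree_below n f1 f2 \<longrightarrow> agree_below n g1 g2 \<longrightarrow>
        agree_below n (m1 f1 g1) (m2 f2 g2))"

lemma agree_below_mono: "agree_below n f g \<Longrightarrow> k \<le> n \<Longrightarrow> agree_below k f g"
  by (auto simp: agree_below_def)

lemma agree_below_sderiv: "agree_below (Suc n) f g \<Longrightarrow> agree_below n (sderiv a f) (sderiv a g)"
  by (auto simp: agree_below_def sderiv_def)

lemma ops_agree_below_0: "ops_agree_below 0 m1 m2"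
  by (simp add: ops_agree_below_def agree_below_def)

lemma env4_agree_below:
  "agree_below n f1 f2 \<Longrightarrow> agree_below n f1' f2' \<Longrightarrow> agree_below n g1 g2 \<Longrightarrow>
   agree_below n g1' g2' \<Longrightarrow> agree_below n (env4 f1 f1' g1 g1' v) (env4 f2 f2' g2 g2' v)"
  by (cases v) (auto simp: env4_def)

lemma sem_agree_below:
  "ops_agree_below n m1 m2 \<Longrightarrow> (\<And>v. agree_below n (\<rho>1 v) (\<rho>2 v)) \<Longrightarrow>
   agree_below n (sem m1 \<rho>1 u) (sem m2 \<rho>2 u)"
  by (induction u) (auto simp: ops_agree_below_def agree_below_def szero_def sscal_def splus_def)

definition P_step :: "var4 trm \<Rightarrow> ('a series \<Rightarrow> 'a series \<Rightarrow> 'a series) \<Rightarrow>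
    'a series \<Rightarrow> 'a series \<Rightarrow> 'a series" where
  "P_step P m f g w = (case w of [] \<Rightarrow> f [] * g []
     | a # v \<Rightarrow> sem m (env4 f (sderiv a f) g (sderiv a g)) P v)"

lemma P_step_Nil: "P_step P m f g [] = f [] * g []"
  by (simp add: P_step_def)

lemma P_step_Cons: "P_step P m f g (a # v) = sem m (env4 f (sderiv a f) g (sderiv a g)) P v"
  by (simp add: P_step_def)

lemma is_P_product_iff_P_step_fixpoint: "is_P_product P m \<longleftrightarrow> P_step P m = m"
proof
  assume "is_P_product P m"
  then have "m f g [] = f [] * g []"
    and "m f g (a # v) = sem m (env4 f (sderiv a f) g (sderiv a g)) P v" for f g a v
    by (auto simp: is_P_product_def sderiv_def fun_eq_iff)
  then show "P_step P m = m"
    by (auto simp: P_step_def fun_eq_iff split: list.split)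
next
  assume "P_step P m = m"
  then have "m f g w = P_step P m f g w" for f g w
    by simp
  then show "is_P_product P m"
    by (auto simp: is_P_product_def P_step_Nil P_step_Cons sderiv_def fun_eq_iff)
qed

lemma ops_agree_below_P_step:
  assumes "ops_agree_below n m1 m2"
  shows "ops_agree_below (Suc n) (P_step P m1) (P_step P m2)"
  unfolding ops_agree_below_def
proof (intro allI impI)
  fix f1 f2 g1 g2 :: "'a series"
  assume f: "agree_below (Suc n) f1 f2" and g: "agree_below (Suc n) g1 g2"
  have "P_step P m1 f1 g1 w = P_step P m2 f2 g2 w" if "length w < Suc n" for w
  proof (cases w)
    case Nil
    then show ?thesis
      using f g by (simp add: P_step_Nil agree_below_def)
  next
    case (Cons a v)
    have "agree_below n (sem m1 (env4 f1 (sderiv a f1) g1 (sderiv a g1)) P)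
        (sem m2 (env4 f2 (sderiv a f2) g2 (sderiv a g2)) P)"
      using assms f g
      by (intro sem_agree_below env4_agree_below agree_below_sderiv) (auto elim: agree_below_mono)
    then show ?thesis
      using that by (simp add: Cons P_step_Cons agree_below_def)
  qed
  then show "agree_below (Suc n) (P_step P m1 f1 g1) (P_step P m2 f2 g2)"
    by (simp add: agree_below_def)
qed

text \<open>Whatever operation they start from, n iterations of P_step fix the product on words shorter
  than n; this gives uniqueness, and existence via P_limit.\<close>

lemma ops_agree_below_P_step_iter: "ops_agree_below n ((P_step P ^^ n) m1) ((P_step P ^^ n) m2)"
  by (induction n) (simp_all add: ops_agree_below_0 ops_agree_below_P_step)

lemma P_product_unique:
  assumes "is_P_product P m1" and "is_P_product P m2"
  shows "m1 = m2"
proof (intro ext)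
  fix f g :: "'a series" and w :: "'a list"
  have fixed: "(P_step P ^^ n) m = m" if "is_P_product P m" for n m
    using that by (induction n) (simp_all add: is_P_product_iff_P_step_fixpoint)
  have "ops_agree_below (Suc (length w)) m1 m2"
    using ops_agree_below_P_step_iter[of "Suc (length w)" P m1 m2] by (simp only: fixed assms)
  then show "m1 f g w = m2 f g w"
    by (auto simp: ops_agree_below_def agree_below_def)
qed

definition P_limit :: "var4 trm \<Rightarrow> 'a series \<Rightarrow> 'a series \<Rightarrow> 'a series" where
  "P_limit P f g w = (P_step P ^^ Suc (length w)) (\<lambda>_ _. szero) f g w"

lemma P_limit_Cons:
  "P_limit P f g (a # v) = P_step P ((P_step P ^^ Suc (length v)) (\<lambda>_ _. szero)) f g (a # v)"
  unfolding P_limit_def length_Cons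
  by (rule arg_cong[where f = "\<lambda>m. m f g (a # v)"])
    (rule funpow.simps(2)[THEN fun_cong, unfolded comp_apply])

lemma ops_agree_below_P_limit: "ops_agree_below n (P_limit P) ((P_step P ^^ n) m)"
  unfolding ops_agree_below_def
proof (intro allI impI)
  fix f1 f2 g1 g2 :: "'a series"
  assume f: "agree_below n f1 f2" and g: "agree_below n g1 g2"
  have "P_limit P f1 g1 w = (P_step P ^^ n) m f2 g2 w" if w: "length w < n" for w
  proof -
    define k where "k = Suc (length w)"
    have "k + (n - k) = n"
      using w by (simp add: k_def)
    then have "(P_step P ^^ n) m = (P_step P ^^ k) ((P_step P ^^ (n - k)) m)"
      by (metis funpow_add comp_apply)
    moreover have "ops_agree_below k ((P_step P ^^ k) (\<lambda>_ _. szero)) ((P_step P ^^ k) ((P_step P ^^ (n - k)) m))"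
      by (rule ops_agree_below_P_step_iter)
    moreover have "agree_below k f1 f2" "agree_below k g1 g2"
      using f g w by (auto simp: k_def elim: agree_below_mono)
    moreover have "P_limit P f1 g1 w = (P_step P ^^ k) (\<lambda>_ _. szero) f1 g1 w"
      by (simp only: P_limit_def k_def)
    ultimately show ?thesis
      by (simp add: ops_agree_below_def agree_below_def k_def)
  qed
  then show "agree_below n (P_limit P f1 g1) ((P_step P ^^ n) m f2 g2)"
    by (simp add: agree_below_def)
qed

lemma is_P_product_P_limit: "is_P_product P (P_limit P)"
  unfolding is_P_product_iff_P_step_fixpoint
proof (intro ext)
  fix f g :: "'a series" and w :: "'a list"
  show "P_step P (P_limit P) f g w = P_limit P f g w"
  proof (cases w)
    case Nil
    then show ?thesis
      by (simp add: P_step_Nil P_limit_def)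
  next
    case (Cons a v)
    let ?\<rho> = "env4 f (sderiv a f) g (sderiv a g)" and ?m = "(P_step P ^^ Suc (length v)) (\<lambda>_ _. szero)"
    have "agree_below (Suc (length v)) (sem (P_limit P) ?\<rho> P) (sem ?m ?\<rho> P)"
      by (intro sem_agree_below ops_agree_below_P_limit) (simp add: agree_below_def)
    then have "P_step P (P_limit P) f g (a # v) = P_step P ?m f g (a # v)"
      by (simp add: P_step_Cons agree_below_def)
    also have "\<dots> = P_limit P f g (a # v)"
      by (rule P_limit_Cons[symmetric])
    finally show ?thesis
      by (simp only: Cons)
  qed
qed

lemma is_P_product_pprod: "is_P_product P (pprod P)"
  unfolding pprod_def
  by (rule theI[of "is_P_product P", OF is_P_product_P_limit]) (rule P_product_unique[OF _ is_P_product_P_limit])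

section \<open>The normal form of a special product rule\<close>

definition rule_eval :: "var4 trm \<Rightarrow> rat \<Rightarrow> rat \<Rightarrow> rat \<Rightarrow> rat \<Rightarrow> rat" where
  "rule_eval P x xd y yd = peval (\<lambda>v. case v of X \<Rightarrow> x | Xd \<Rightarrow> xd | Y \<Rightarrow> y | Yd \<Rightarrow> yd) P"

lemma peval_subst: "peval \<sigma> (subst s t) = peval (\<lambda>v. peval \<sigma> (s v)) t"
  by (induction t) auto

lemma sem_subst: "sem m \<rho> (subst s t) = sem m (\<lambda>v. sem m \<rho> (s v)) t"
  by (induction t) auto

lemma peval_app4:
  "peval \<sigma> (app4 P s1 s2 s3 s4) = rule_eval P (peval \<sigma> s1) (peval \<sigma> s2) (peval \<sigma> s3) (peval \<sigma> s4)"
  unfolding app4_def rule_eval_def peval_subst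
  by (rule arg_cong[where f = "\<lambda>r. peval r P"]) (simp add: fun_eq_iff split: var4.split)

lemma sem_app4:
  "sem m \<rho> (app4 P s1 s2 s3 s4) = sem m (env4 (sem m \<rho> s1) (sem m \<rho> s2) (sem m \<rho> s3) (sem m \<rho> s4)) P"
  unfolding app4_def env4_def sem_subst
  by (rule arg_cong[where f = "\<lambda>r. sem m r P"]) (simp add: fun_eq_iff split: var4.split)

lemma peval_eq_rule_eval: "peval \<rho> P = rule_eval P (\<rho> X) (\<rho> Xd) (\<rho> Y) (\<rho> Yd)"
  unfolding rule_eval_def
  by (rule arg_cong[where f = "\<lambda>r. peval r P"]) (simp add: fun_eq_iff split: var4.split)

lemma special_rule_eval:
  assumes "special P"
  shows rule_eval_additive: "rule_eval P (x + y) (xd + yd) z zd = rule_eval P x xd z zd + rule_eval P y yd z zd"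
    and rule_eval_assoc:
      "rule_eval P x xd (y * z) (rule_eval P y yd z zd) = rule_eval P (x * y) (rule_eval P x xd y yd) z zd"
    and rule_eval_commute: "rule_eval P x xd y yd = rule_eval P y yd x xd"
proof -
  define \<rho> where "\<rho> = (\<lambda>v. case v of X6 \<Rightarrow> x | Xd6 \<Rightarrow> xd | Y6 \<Rightarrow> y | Yd6 \<Rightarrow> yd | Z6 \<Rightarrow> z | Zd6 \<Rightarrow> zd)"
  from assms show "rule_eval P (x + y) (xd + yd) z zd = rule_eval P x xd z zd + rule_eval P y yd z zd"
    and "rule_eval P x xd (y * z) (rule_eval P y yd z zd) = rule_eval P (x * y) (rule_eval P x xd y yd) z zd"
    and "rule_eval P x xd y yd = rule_eval P y yd x xd"
    unfolding special_def poly_equiv_def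
    by (auto dest!: spec[of _ \<rho>] simp: peval_app4 \<rho>_def)
qed

lemma additive_rat_homogeneous:
  fixes F :: "rat \<Rightarrow> rat \<Rightarrow> rat"
  assumes add: "\<And>x xd y yd. F (x + y) (xd + yd) = F x xd + F y yd"
  shows "F (q * x) (q * xd) = q * F x xd"
proof -
  have F0: "F 0 0 = 0"
    using add[of 0 0 0 0] by simp
  have nat: "F (of_nat n * x) (of_nat n * xd) = of_nat n * F x xd" for n :: nat and x xd
    by (induction n) (simp_all add: F0 add distrib_right flip: add.commute[of 1])
  have neg: "F (- x) (- xd) = - F x xd" for x xd
    using add[of x "- x" xd "- xd"] F0 by simp
  have int: "F (of_int k * x) (of_int k * xd) = of_int k * F x xd" for k :: int and x xd
  proof (cases "k \<ge> 0")
    case True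
    then show ?thesis
      using nat[of "nat k"] by simp
  next
    case False
    then show ?thesis
      using nat[of "nat (- k)"] neg[of "of_nat (nat (- k)) * x" "of_nat (nat (- k)) * xd"] by simp
  qed
  obtain a b where q: "q = of_int a / of_int b" and b: "b > 0"
    by (cases q) (auto simp: Fract_of_int_quotient)
  have "of_int b * F (q * x) (q * xd) = F (of_int b * (q * x)) (of_int b * (q * xd))"
    using int by simp
  also have "\<dots> = of_int a * F x xd"
    using b int by (simp add: q)
  finally show ?thesis
    using b by (simp add: q field_simps)
qed

lemma rule_eval_special_normal_form:
  assumes "special P"
  shows "rule_eval P x xd y yd = rule_eval P 1 0 1 0 * x * y
    + rule_eval P 0 1 1 0 * (xd * y + x * yd) + rule_eval P 0 1 0 1 * xd * yd"
proof -
  have lin: "rule_eval P x xd y yd = x * rule_eval P 1 0 y yd + xd * rule_eval P 0 1 y yd" for x xd y yd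
  proof -
    have hom: "rule_eval P (q * a) (q * b) y yd = q * rule_eval P a b y yd" for q a b
      by (rule additive_rat_homogeneous) (rule rule_eval_additive[OF assms])
    have "rule_eval P x xd y yd = rule_eval P (x + 0) (0 + xd) y yd"
      by simp
    also have "\<dots> = rule_eval P x 0 y yd + rule_eval P 0 xd y yd"
      by (rule rule_eval_additive[OF assms])
    finally show ?thesis
      using hom[of x 1 0] hom[of xd 0 1] by simp
  qed
  have "rule_eval P 1 0 y yd = y * rule_eval P 1 0 1 0 + yd * rule_eval P 0 1 1 0"
    and "rule_eval P 0 1 y yd = y * rule_eval P 0 1 1 0 + yd * rule_eval P 0 1 0 1"
    using lin rule_eval_commute[OF assms] by metis+
  then show ?thesis
    using lin[of x xd y yd] by (simp add: algebra_simps)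
qed

lemma special_normal_form:
  assumes "special P"
  obtains c1 c2 c4
  where "\<And>x xd y yd. rule_eval P x xd y yd = c1 * x * y + c2 * (xd * y + x * yd) + c4 * xd * yd"
    and "c2 + c4 * c1 = c2 * c2"
proof
  let ?c1 = "rule_eval P 1 0 1 0" and ?c2 = "rule_eval P 0 1 1 0" and ?c4 = "rule_eval P 0 1 0 1"
  note nf = rule_eval_special_normal_form[OF assms]
  show "rule_eval P x xd y yd = ?c1 * x * y + ?c2 * (xd * y + x * yd) + ?c4 * xd * yd" for x xd y yd
    by (rule nf)
  have "rule_eval P 1 0 (1 * 0) (rule_eval P 1 0 0 1) = rule_eval P (1 * 1) (rule_eval P 1 0 1 0) 0 1"
    by (rule rule_eval_assoc[OF assms])
  then show "?c2 + ?c4 * ?c1 = ?c2 * ?c2"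
    by (subst (asm) (1 2 3 4) nf) simp
qed

section \<open>The derivative of a term depends only on its polynomial\<close>

fun dir_deriv :: "('v \<Rightarrow> rat) \<Rightarrow> ('v \<Rightarrow> rat) \<Rightarrow> 'v trm \<Rightarrow> rat" where
  "dir_deriv b s (Var x) = s x"
| "dir_deriv b s Zero = 0"
| "dir_deriv b s (Scal c u) = c * dir_deriv b s u"
| "dir_deriv b s (Plus u v) = dir_deriv b s u + dir_deriv b s v"
| "dir_deriv b s (Times u v) = dir_deriv b s u * peval b v + peval b u * dir_deriv b s v"

fun line_poly :: "('v \<Rightarrow> rat) \<Rightarrow> ('v \<Rightarrow> rat) \<Rightarrow> 'v trm \<Rightarrow> rat poly" where
  "line_poly b s (Var x) = [:b x, s x:]"
| "line_poly b s Zero = 0"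
| "line_poly b s (Scal c u) = smult c (line_poly b s u)"
| "line_poly b s (Plus u v) = line_poly b s u + line_poly b s v"
| "line_poly b s (Times u v) = line_poly b s u * line_poly b s v"

lemma poly_line_poly: "poly (line_poly b s u) t = peval (\<lambda>x. b x + t * s x) u"
  by (induction u) (auto simp: algebra_simps)

lemma coeff_line_poly: "coeff (line_poly b s u) 0 = peval b u \<and> coeff (line_poly b s u) 1 = dir_deriv b s u"
  by (induction u) (auto simp: coeff_mult atMost_Suc algebra_simps)

lemma dir_deriv_poly_equiv:
  assumes "u \<approx> v"
  shows "dir_deriv b s u = dir_deriv b s v"
proof -
  have "poly (line_poly b s u) = poly (line_poly b s v)"
    using assms by (auto simp: poly_line_poly poly_equiv_def)
  then have "line_poly b s u = line_poly b s v"
    by (simp add: poly_eq_poly_eq_iff)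
  then show ?thesis
    using coeff_line_poly[of b s u] coeff_line_poly[of b s v] by simp
qed

text \<open>The second component of the value of a term in the algebra on Q x Q with product
  (p,s)(q,t) = (pq, c1 pq + c2 (sq + pt) + c4 st), the variables being valued at (a x, a' x).\<close>

fun deriv_eval :: "rat \<Rightarrow> rat \<Rightarrow> rat \<Rightarrow> ('v \<Rightarrow> rat) \<Rightarrow> ('v \<Rightarrow> rat) \<Rightarrow> 'v trm \<Rightarrow> rat" where
  "deriv_eval c1 c2 c4 a a' (Var x) = a' x"
| "deriv_eval c1 c2 c4 a a' Zero = 0"
| "deriv_eval c1 c2 c4 a a' (Scal c u) = c * deriv_eval c1 c2 c4 a a' u"
| "deriv_eval c1 c2 c4 a a' (Plus u v) = deriv_eval c1 c2 c4 a a' u + deriv_eval c1 c2 c4 a a' v"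
| "deriv_eval c1 c2 c4 a a' (Times u v) = c1 * peval a u * peval a v
     + c2 * (deriv_eval c1 c2 c4 a a' u * peval a v + peval a u * deriv_eval c1 c2 c4 a a' v)
     + c4 * deriv_eval c1 c2 c4 a a' u * deriv_eval c1 c2 c4 a a' v"

lemma deriv_eval_multiplicative_coordinate:
  assumes "c2 + c4 * c1 = c2 * c2"
  shows "peval (\<lambda>x. c2 * a x + c4 * a' x) u = c2 * peval a u + c4 * deriv_eval c1 c2 c4 a a' u"
proof (induction u)
  case (Times u v)
  let ?pu = "peval a u" and ?pv = "peval a v"
    and ?su = "deriv_eval c1 c2 c4 a a' u" and ?sv = "deriv_eval c1 c2 c4 a a' v"
  have "(c2 * ?pu + c4 * ?su) * (c2 * ?pv + c4 * ?sv)
      = c2 * (?pu * ?pv) + c4 * (c1 * ?pu * ?pv + c2 * (?su * ?pv + ?pu * ?sv) + c4 * ?su * ?sv)"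
    using assms by algebra
  with Times show ?case
    by (simp add: algebra_simps)
qed (auto simp: algebra_simps)

lemma dir_deriv_eq_deriv_eval_dual_numbers:
  "dir_deriv a (\<lambda>x. a' x + c1 * a x) u = deriv_eval c1 1 0 a a' u + c1 * peval a u"
  by (induction u) (auto simp: algebra_simps)

lemma peval_zero_valuation: "peval (\<lambda>_. 0) u = 0"
  by (induction u) auto

lemma dir_deriv_eq_deriv_eval_null_square:
  "dir_deriv (\<lambda>_. 0) (\<lambda>x. a' x - c1 * a x) u = deriv_eval c1 0 0 a a' u - c1 * peval a u"
  by (induction u) (simp_all add: peval_zero_valuation right_diff_distrib distrib_left mult.left_commute)

lemma deriv_eval_poly_equiv:
  assumes assoc: "c2 + c4 * c1 = c2 * c2" and uv: "u \<approx> v"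
  shows "deriv_eval c1 c2 c4 a a' u = deriv_eval c1 c2 c4 a a' v"
proof (cases "c4 = 0")
  case False
  have "peval (\<lambda>x. c2 * a x + c4 * a' x) u = peval (\<lambda>x. c2 * a x + c4 * a' x) v"
    and "peval a u = peval a v"
    using uv by (simp_all add: poly_equiv_def)
  then have "c4 * deriv_eval c1 c2 c4 a a' u = c4 * deriv_eval c1 c2 c4 a a' v"
    by (simp add: deriv_eval_multiplicative_coordinate[OF assoc])
  with False show ?thesis
    by simp
next
  case True
  then consider "c2 = 1" | "c2 = 0"
    using assoc by (metis mult_cancel_right1 mult_zero_left add_0_right)
  then show ?thesis
  proof cases
    case 1
    with True uv show ?thesis
      using dir_deriv_poly_equiv[OF uv, of a "\<lambda>x. a' x + c1 * a x"]
      by (simp add: dir_deriv_eq_deriv_eval_dual_numbers poly_equiv_def)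
  next
    case 2
    with True uv show ?thesis
      using dir_deriv_poly_equiv[OF uv, of "\<lambda>_. 0" "\<lambda>x. a' x - c1 * a x"]
      by (simp add: dir_deriv_eq_deriv_eval_null_square poly_equiv_def)
  qed
qed

section \<open>Polynomially equivalent terms denote the same series\<close>

text \<open>In the derivative of a term, variable 2x stands for the series x and 2x+1 for its derivative.
  Variables are natural numbers so that the induction on words below stays within one type.\<close>

definition even_trm :: "nat trm \<Rightarrow> nat trm" where
  "even_trm u = subst (\<lambda>x. Var (2 * x)) u"

fun deriv_trm :: "var4 trm \<Rightarrow> nat trm \<Rightarrow> nat trm" where
  "deriv_trm P (Var x) = Var (2 * x + 1)"
| "deriv_trm P Zero = Zero"
| "deriv_trm P (Scal c u) = Scal c (deriv_trm P u)"
| "deriv_trm P (Plus u v) = Plus (deriv_trm P u) (deriv_trm P v)"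
| "deriv_trm P (Times u v) = app4 P (even_trm u) (deriv_trm P u) (even_trm v) (deriv_trm P v)"

definition deriv_env :: "'a \<Rightarrow> (nat \<Rightarrow> 'a series) \<Rightarrow> nat \<Rightarrow> 'a series" where
  "deriv_env a \<rho> k = (if even k then \<rho> (k div 2) else sderiv a (\<rho> (k div 2)))"

lemma peval_deriv_trm:
  assumes "\<And>x xd y yd. rule_eval P x xd y yd = c1 * x * y + c2 * (xd * y + x * yd) + c4 * xd * yd"
  shows "peval \<sigma> (deriv_trm P u) = deriv_eval c1 c2 c4 (\<lambda>x. \<sigma> (2 * x)) (\<lambda>x. \<sigma> (2 * x + 1)) u"
  by (induction u) (auto simp: peval_app4 assms even_trm_def peval_subst algebra_simps)

lemma sem_deriv_trm:
  assumes "is_P_product P m"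
  shows "sem m (deriv_env a \<rho>) (deriv_trm P u) = sderiv a (sem m \<rho> u)"
proof (induction u)
  case (Var x)
  then show ?case by (simp add: deriv_env_def)
next
  case Zero
  then show ?case by (simp add: sderiv_def szero_def)
next
  case (Scal c u)
  then show ?case by (simp add: sderiv_def sscal_def)
next
  case (Plus u v)
  then show ?case by (simp add: sderiv_def splus_def)
next
  case (Times u v)
  have "sem m (deriv_env a \<rho>) (even_trm t) = sem m \<rho> t" for t
    by (simp add: even_trm_def sem_subst deriv_env_def)
  with Times assms show ?case
    by (simp add: sem_app4 is_P_product_def)
qed

lemma sem_Nil: "is_P_product P m \<Longrightarrow> sem m \<rho> u [] = peval (\<lambda>x. \<rho> x []) u"
  by (induction u) (auto simp: szero_def sscal_def splus_def is_P_product_def)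

instance var4 :: countable
  by countable_datatype

locale normalized_P_product =
  fixes P :: "var4 trm" and m :: "'a series \<Rightarrow> 'a series \<Rightarrow> 'a series" and c1 c2 c4 :: rat
  assumes is_P_product: "is_P_product P m"
    and rule_eval_eq: "\<And>x xd y yd. rule_eval P x xd y yd = c1 * x * y + c2 * (xd * y + x * yd) + c4 * xd * yd"
    and coeffs_assoc: "c2 + c4 * c1 = c2 * c2"
begin

lemma sem_poly_equiv_nat:
  assumes "u \<approx> v"
  shows "sem m \<rho> u w = sem m \<rho> (v :: nat trm) w"
  using assms
proof (induction w arbitrary: \<rho> u v)
  case Nil
  then show ?case
    by (simp add: sem_Nil[OF is_P_product] poly_equiv_def)
next
  case (Cons a w)
  have "deriv_trm P u \<approx> deriv_trm P v"
    using Cons.prems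
    by (simp add: poly_equiv_def peval_deriv_trm[OF rule_eval_eq] deriv_eval_poly_equiv[OF coeffs_assoc])
  then have "sem m (deriv_env a \<rho>) (deriv_trm P u) w = sem m (deriv_env a \<rho>) (deriv_trm P v) w"
    by (rule Cons.IH)
  then show ?case
    by (simp add: sem_deriv_trm[OF is_P_product] sderiv_def)
qed

lemma sem_poly_equiv:
  fixes u v :: "'v::countable trm"
  assumes "u \<approx> v"
  shows "sem m \<rho> u = sem m \<rho> v"
proof -
  let ?ren = "subst (\<lambda>x. Var (to_nat x)) :: 'v trm \<Rightarrow> nat trm"
  have sem_ren: "sem m (\<rho> \<circ> from_nat) (?ren t) = sem m \<rho> t" for t
    by (simp add: sem_subst)
  have "?ren u \<approx> ?ren v"
    using assms by (simp add: poly_equiv_def peval_subst)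
  then have "sem m (\<rho> \<circ> from_nat) (?ren u) w = sem m (\<rho> \<circ> from_nat) (?ren v) w" for w
    by (rule sem_poly_equiv_nat)
  then show ?thesis
    by (simp add: sem_ren fun_eq_iff)
qed

lemma sem_env4_rule:
  "sem m (env4 f f' g g') P = (\<lambda>w. c1 * m f g w + c2 * (m f' g w + m f g' w) + c4 * m f' g' w)"
proof -
  define P' where "P' = Plus (Scal c1 (Times (Var X) (Var Y)))
     (Plus (Scal c2 (Plus (Times (Var Xd) (Var Y)) (Times (Var X) (Var Yd)))) (Scal c4 (Times (Var Xd) (Var Yd))))"
  have "P \<approx> P'"
    unfolding poly_equiv_def by (simp add: peval_eq_rule_eval[of _ P] rule_eval_eq P'_def algebra_simps)
  then have "sem m (env4 f f' g g') P = sem m (env4 f f' g g') P'"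
    by (rule sem_poly_equiv)
  then show ?thesis
    by (simp add: P'_def env4_def splus_def sscal_def add.assoc)
qed

lemma P_product_Cons:
  "m f g (b # w) = c1 * m f g w
     + c2 * (m (sderiv b f) g w + m f (sderiv b g) w) + c4 * m (sderiv b f) (sderiv b g) w"
proof -
  have "m f g (b # w) = sderiv b (m f g) w"
    by (simp add: sderiv_def)
  also have "\<dots> = sem m (env4 f (sderiv b f) g (sderiv b g)) P w"
    using is_P_product by (simp add: is_P_product_def)
  finally show ?thesis
    by (simp add: sem_env4_rule)
qed

end

section \<open>Reversal\<close>

definition sderiv_right :: "'a \<Rightarrow> 'a series \<Rightarrow> 'a series" where
  "sderiv_right a f = (\<lambda>w. f (w @ [a]))"

lemma sderiv_sderiv_right: "sderiv b (sderiv_right a f) = sderiv_right a (sderiv b f)"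
  by (simp add: sderiv_right_def sderiv_def)

lemma srev_srev [simp]: "srev (srev f) = f"
  by (simp add: srev_def)

lemma sem_srev_conj:
  "sem (\<lambda>f g. srev (m (srev f) (srev g))) \<rho> u = srev (sem m (\<lambda>x. srev (\<rho> x)) u)"
  by (induction u) (auto simp: srev_def szero_def sscal_def splus_def)

lemma srev_env4: "(\<lambda>x. srev (env4 f f' g g' x)) = env4 (srev f) (srev f') (srev g) (srev g')"
  by (simp add: env4_def fun_eq_iff split: var4.split)

lemma sderiv_right_srev: "sderiv_right a (srev f) = srev (sderiv a f)"
  by (simp add: sderiv_right_def srev_def sderiv_def)

context normalized_P_product
begin

lemma P_product_snoc:
  "m f g (w @ [a]) = c1 * m f g w
     + c2 * (m (sderiv_right a f) g w + m f (sderiv_right a g) w)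
     + c4 * m (sderiv_right a f) (sderiv_right a g) w"
proof (induction w arbitrary: f g)
  case Nil
  have "m f g [] = f [] * g []" for f g
    using is_P_product by (simp add: is_P_product_def)
  then show ?case
    using P_product_Cons[of f g a "[]"] by (simp add: sderiv_right_def sderiv_def)
next
  case (Cons b w)
  show ?case
    by (simp only: append_Cons P_product_Cons Cons.IH sderiv_sderiv_right) (simp add: algebra_simps)
qed

lemma is_P_product_srev_conj: "is_P_product P (\<lambda>f g. srev (m (srev f) (srev g)))"
  unfolding is_P_product_def
proof (intro allI conjI)
  fix f g :: "'a series" and a :: 'a
  show "srev (m (srev f) (srev g)) [] = f [] * g []"
    using is_P_product by (simp add: srev_def is_P_product_def)
  have "sderiv a (srev (m (srev f) (srev g))) w
      = c1 * m (srev f) (srev g) (rev w)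
        + c2 * (m (srev (sderiv a f)) (srev g) (rev w) + m (srev f) (srev (sderiv a g)) (rev w))
        + c4 * m (srev (sderiv a f)) (srev (sderiv a g)) (rev w)" for w
  proof -
    have "sderiv a (srev (m (srev f) (srev g))) w = m (srev f) (srev g) (rev w @ [a])"
      by (simp add: sderiv_def srev_def)
    then show ?thesis
      by (simp only: P_product_snoc sderiv_right_srev)
  qed
  then show "sderiv a (srev (m (srev f) (srev g)))
      = sem (\<lambda>f g. srev (m (srev f) (srev g))) (env4 f (sderiv a f) g (sderiv a g)) P"
    unfolding sem_srev_conj srev_env4 sem_env4_rule
    by (simp add: fun_eq_iff srev_def)
qed

end

theorem mainTheorem17:
  fixes P :: "var4 trm"
  assumes "special P"
  shows "(\<forall>f g :: ('a::finite) series. srev (pprod P f g) = pprod P (srev f) (srev g))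
    \<and> srev (szero :: 'a series) = szero
    \<and> (\<forall>(c::rat) (f :: 'a series). srev (sscal c f) = sscal c (srev f))
    \<and> (\<forall>f g :: 'a series. srev (splus f g) = splus (srev f) (srev g))"
proof (intro conjI allI)
  fix f g :: "'a series"
  obtain c1 c2 c4 where normalized: "normalized_P_product P (pprod P :: 'a series \<Rightarrow> _) c1 c2 c4"
    using special_normal_form[OF assms] is_P_product_pprod by (metis normalized_P_product.intro)
  have "(\<lambda>f g. srev (pprod P (srev f) (srev g))) = (pprod P :: 'a series \<Rightarrow> _)"
    using normalized_P_product.is_P_product_srev_conj[OF normalized] is_P_product_pprod[of P]
    by (rule P_product_unique)
  then show "srev (pprod P f g) = pprod P (srev f) (srev g)"
    by (metis srev_srev)
qed (simp_all add: srev_def szero_def sscal_def splus_def)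

end
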